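(* Let $\mu_1$ be an LTI probability measure on $\{0,1\}^{\{0,1\}}$ and set $c_0=\mu_1(00)$, $c_1=\mu_1(11)$, $c_2=\mu_1(01)+\mu_1(10)$. If $L\ge2$ is even, $\mu_1$ has an extension to a translation invariant probability measure on $Y_L=\{0,1\}^{\mathbb{Z}_L}$. If $L\ge3$ is odd, $\mu_1$ has such an extension if and only if $c_2\le1-1/L$.
   Context: $\mathbb{Z}_L$ is the cycle of $L$ sites with translations mod $L$; an extension to $Y_L$ is a rotation-invariant probability measure on $Y_L$ whose marginal on sites $0,1$ is $\mu_1$. For $k=1$, LTI means $\mu_1(01)=\mu_1(10)$. *)

theory Defs
  imports "HOL-Probability.Probability_Mass_Function"
begin

text \<open>Configurations on the cycle Z_L = {0,...,L-1}, encoded as functions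
  nat => bool that vanish outside {0..<L}.  Y_L is the set of such configurations.\<close>

definition Y :: "nat \<Rightarrow> (nat \<Rightarrow> bool) set" where
  "Y L = {x. \<forall>i\<ge>L. \<not> x i}"

definition rot :: "nat \<Rightarrow> (nat \<Rightarrow> bool) \<Rightarrow> (nat \<Rightarrow> bool)" where
  "rot L x = (\<lambda>i. if i < L then x ((i + 1) mod L) else False)"

text \<open>mu1 is a probability measure on {0,1}^{0,1}: pattern (a,b) means site 0 = a, site 1 = b
  (True = 1). LTI for k = 1 means mu1(01) = mu1(10).\<close>
definition LTI :: "(bool \<times> bool) pmf \<Rightarrow> bool" where
  "LTI \<mu>1 \<longleftrightarrow> pmf \<mu>1 (False, True) = pmf \<mu>1 (True, False)"

definition has_extension :: "nat \<Rightarrow> (bool \<times> bool) pmf \<Rightarrow> bool" where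
  "has_extension L \<mu>1 \<longleftrightarrow>
     (\<exists>\<nu> :: (nat \<Rightarrow> bool) pmf. set_pmf \<nu> \<subseteq> Y L \<and> map_pmf (rot L) \<nu> = \<nu> \<and>
        map_pmf (\<lambda>x. (x 0, x 1)) \<nu> = \<mu>1)"

end

theory Submission
  imports Defs
begin

text \<open>A configuration x on the L-cycle, spread uniformly over its rotations, gives a
  rotation-invariant measure whose marginal on sites 0, 1 is the empirical distribution of the
  L edges (x k, x (k+1)) of x, and mixtures of such measures are again extensions. The constant
  configurations give the point masses at 00 and 11. The 2-periodic configuration 0101... gives
  mass 1/2 to each of 01 and 10 when L is even; when L is odd it has to close up with one defect
  edge 00 or 11, which carries mass 1/L, leaving (L-1)/(2L) for each of 01 and 10. Mixing these
  realises every LTI measure for even L, and every LTI measure with c2 \<le> 1 - 1/L for odd L.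
  Conversely, every configuration on an odd cycle has an edge with equal ends; by invariance each
  of the L edges has equal ends with probability c0 + c1 = 1 - c2, so the union bound gives
  1 \<le> L (1 - c2).\<close>

definition shift :: "nat \<Rightarrow> nat \<Rightarrow> (nat \<Rightarrow> bool) \<Rightarrow> nat \<Rightarrow> bool" where
  "shift L k x = (\<lambda>j. if j < L then x ((j + k) mod L) else False)"

definition cyclic_orbit :: "nat \<Rightarrow> (nat \<Rightarrow> bool) \<Rightarrow> (nat \<Rightarrow> bool) pmf" where
  "cyclic_orbit L x = map_pmf (\<lambda>k. shift L k x) (pmf_of_set {..<L})"

definition edge_pmf :: "nat \<Rightarrow> (nat \<Rightarrow> bool) \<Rightarrow> (bool \<times> bool) pmf" where
  "edge_pmf L x = map_pmf (\<lambda>k. (x k, x (Suc k mod L))) (pmf_of_set {..<L})"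

lemma rot_shift: "rot L (shift L k x) = shift L (Suc k) x"
  unfolding rot_def shift_def by (rule ext) (simp add: mod_add_left_eq)

lemma shift_mod: "shift L (k mod L) x = shift L k x"
  unfolding shift_def by (rule ext) (simp add: mod_add_right_eq)

lemma shift_edge:
  assumes "2 \<le> L" "i < L"
  shows "shift L i x 0 = x i" "shift L i x 1 = x (Suc i mod L)"
  using assms by (simp_all add: shift_def)

lemma set_cyclic_orbit_subset_Y: "set_pmf (cyclic_orbit L x) \<subseteq> Y L"
  by (auto simp: cyclic_orbit_def shift_def Y_def)

lemma bij_betw_Suc_mod: "0 < L \<Longrightarrow> bij_betw (\<lambda>k. Suc k mod L) {..<L} {..<L}"
  by (rule bij_betwI[where g = "\<lambda>k. if k = 0 then L - 1 else k - 1"]) (auto simp: mod_Suc)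

lemma map_rot_cyclic_orbit:
  assumes "0 < L"
  shows "map_pmf (rot L) (cyclic_orbit L x) = cyclic_orbit L x"
proof -
  have "map_pmf (rot L) (cyclic_orbit L x)
      = map_pmf (\<lambda>k. shift L k x) (map_pmf (\<lambda>k. Suc k mod L) (pmf_of_set {..<L}))"
    by (simp add: cyclic_orbit_def pmf.map_comp o_def rot_shift shift_mod)
  also have "map_pmf (\<lambda>k. Suc k mod L) (pmf_of_set {..<L}) = pmf_of_set {..<L}"
    using assms by (intro map_pmf_of_set_bij_betw bij_betw_Suc_mod) auto
  finally show ?thesis by (simp add: cyclic_orbit_def)
qed

lemma marginal_cyclic_orbit:
  assumes "2 \<le> L"
  shows "map_pmf (\<lambda>x. (x 0, x 1)) (cyclic_orbit L x) = edge_pmf L x"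
  unfolding cyclic_orbit_def edge_pmf_def pmf.map_comp
  using assms by (intro map_pmf_cong) (auto simp: shift_def lessThan_empty_iff)

lemma pmf_edge_pmf:
  assumes "0 < L"
  shows "pmf (edge_pmf L x) y = card {k. k < L \<and> (x k, x (Suc k mod L)) = y} / real L"
  using assms unfolding edge_pmf_def pmf_map
  by (subst measure_pmf_of_set) (auto simp: lessThan_empty_iff Int_def)

lemma has_extension_bind_edge_pmf:
  assumes "2 \<le> L"
  shows "has_extension L (bind_pmf W (\<lambda>i. edge_pmf L (X i)))"
  unfolding has_extension_def
proof (intro exI conjI)
  let ?\<nu> = "bind_pmf W (\<lambda>i. cyclic_orbit L (X i))"
  show "set_pmf ?\<nu> \<subseteq> Y L"
    using set_cyclic_orbit_subset_Y by auto
  show "map_pmf (rot L) ?\<nu> = ?\<nu>"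
    using assms by (simp add: map_bind_pmf map_rot_cyclic_orbit)
  show "map_pmf (\<lambda>x. (x 0, x 1)) ?\<nu> = bind_pmf W (\<lambda>i. edge_pmf L (X i))"
    by (simp only: map_bind_pmf marginal_cyclic_orbit[OF assms])
qed

lemma has_extension_finite_mixture:
  fixes w :: "'i::finite \<Rightarrow> real" and X :: "'i \<Rightarrow> nat \<Rightarrow> bool"
  assumes "2 \<le> L" and w_nonneg: "\<And>i. 0 \<le> w i" and w_sum: "(\<Sum>i\<in>UNIV. w i) = 1"
    and mix: "\<And>y. pmf \<mu> y = (\<Sum>i\<in>UNIV. w i * pmf (edge_pmf L (X i)) y)"
  shows "has_extension L \<mu>"
proof -
  have "(\<integral>\<^sup>+i. ennreal (w i) \<partial>count_space UNIV) = 1"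
    using w_sum w_nonneg by (simp add: nn_integral_count_space_finite)
  then have pmf_W: "pmf (embed_pmf w) i = w i" for i
    using w_nonneg by (simp add: pmf_embed_pmf)
  have "bind_pmf (embed_pmf w) (\<lambda>i. edge_pmf L (X i)) = \<mu>"
  proof (rule pmf_eqI)
    fix y
    show "pmf (bind_pmf (embed_pmf w) (\<lambda>i. edge_pmf L (X i))) y = pmf \<mu> y"
      by (simp add: pmf_bind integral_measure_pmf[of UNIV] pmf_W mix)
  qed
  with has_extension_bind_edge_pmf[OF \<open>2 \<le> L\<close>] show ?thesis by metis
qed

lemma sum_UNIV_bool_pair:
  fixes f :: "bool \<times> bool \<Rightarrow> 'a::comm_monoid_add"
  shows "(\<Sum>i\<in>UNIV. f i) = f (False, False) + f (False, True) + f (True, False) + f (True, True)"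
proof -
  have U: "(UNIV :: (bool \<times> bool) set) = {(False, False), (False, True), (True, False), (True, True)}"
    by auto
  show ?thesis unfolding U by (simp add: ac_simps)
qed

lemma pmf_bool_pair_sum:
  "pmf \<mu> (False, False) + pmf \<mu> (False, True) + pmf \<mu> (True, False) + pmf \<mu> (True, True) = 1"
  using sum_pmf_eq_1[of UNIV \<mu>] by (simp add: sum_UNIV_bool_pair)

lemma card_odd_below_double: "card {k. k < 2 * m \<and> odd k = c} = m"
proof -
  have "{k. k < 2 * m \<and> odd k = c} = (\<lambda>i. 2 * i + of_bool c) ` {..<m}"
  proof (intro set_eqI iffI)
    fix k
    assume "k \<in> {k. k < 2 * m \<and> odd k = c}"
    then have "k = 2 * (k div 2) + of_bool c" "k div 2 < m"
      by auto
    then show "k \<in> (\<lambda>i. 2 * i + of_bool c) ` {..<m}"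
      by blast
  qed (cases c; auto)
  moreover have "inj_on (\<lambda>i. 2 * i + of_bool c :: nat) {..<m}"
    by (auto simp: inj_on_def)
  ultimately show ?thesis by (simp add: card_image)
qed

lemma edge_pmf_const: "edge_pmf L (\<lambda>_. b) = return_pmf (b, b)"
  by (simp add: edge_pmf_def)

definition alternating :: "bool \<Rightarrow> nat \<Rightarrow> bool" where
  "alternating b j \<longleftrightarrow> b \<noteq> odd j"

lemma edges_alternating:
  "{k. k < L \<and> (alternating b k, alternating b (Suc k mod L)) = y} =
   {k. k < L \<and> (if Suc k = L \<and> odd L then (b, b) else (alternating b k, \<not> alternating b k)) = y}"
proof (rule Collect_cong)
  fix k
  show "(k < L \<and> (alternating b k, alternating b (Suc k mod L)) = y) \<longleftrightarrow>
    (k < L \<and> (if Suc k = L \<and> odd L then (b, b) else (alternating b k, \<not> alternating b k)) = y)"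
    by (cases "Suc k = L") (auto simp: alternating_def)
qed

lemma pmf_edge_pmf_alternating_even:
  assumes "even L" "0 < L"
  shows "pmf (edge_pmf L (alternating b)) (u, v) = (if u \<noteq> v then 1 / 2 else 0)"
proof (cases "u = v")
  case True
  then have "{k. k < L \<and> (alternating b k, alternating b (Suc k mod L)) = (u, v)} = {}"
    unfolding edges_alternating using assms(1) by auto
  then show ?thesis using True assms(2) by (simp add: pmf_edge_pmf)
next
  case False
  then have "{k. k < L \<and> (alternating b k, alternating b (Suc k mod L)) = (u, v)}
      = {k. k < 2 * (L div 2) \<and> odd k = (b \<noteq> u)}"
    unfolding edges_alternating using assms(1) by (auto simp: alternating_def)
  then show ?thesis
    using False assms card_odd_below_double[of "L div 2"] by (simp add: pmf_edge_pmf real_of_nat_div)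
qed

lemma pmf_edge_pmf_alternating_odd:
  assumes "odd L"
  shows "pmf (edge_pmf L (alternating b)) (u, v) =
    (if u = v then (if u = b then 1 / real L else 0) else (real L - 1) / (2 * real L))"
proof -
  have L: "0 < L" using assms by (rule odd_pos)
  show ?thesis
  proof (cases "u = v")
    case True
    then have "{k. k < L \<and> (alternating b k, alternating b (Suc k mod L)) = (u, v)}
        = (if u = b then {L - 1} else {})"
      unfolding edges_alternating using assms L by auto
    then show ?thesis using True L by (simp add: pmf_edge_pmf)
  next
    case False
    then have "{k. k < L \<and> (alternating b k, alternating b (Suc k mod L)) = (u, v)}
        = {k. k < 2 * (L div 2) \<and> odd k = (b \<noteq> u)}"
      unfolding edges_alternating using assms L by (auto simp: alternating_def elim: oddE)
    moreover have "real (L div 2) / real L = (real L - 1) / (2 * real L)"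
      using assms by (auto elim!: oddE simp: field_simps)
    ultimately show ?thesis
      using False L card_odd_below_double[of "L div 2"] by (simp add: pmf_edge_pmf)
  qed
qed

definition two_periodic :: "bool \<times> bool \<Rightarrow> nat \<Rightarrow> bool" where
  "two_periodic = (\<lambda>(b, alt). if alt then alternating b else (\<lambda>_. b))"

lemma mixture_two_periodic_even:
  assumes "even L" "0 < L"
  shows "(\<Sum>i\<in>UNIV. w i * pmf (edge_pmf L (two_periodic i)) (u, v)) =
    (if u = v then w (u, False) else (w (False, True) + w (True, True)) / 2)"
  using assms by (cases u; cases v) (simp_all add: sum_UNIV_bool_pair two_periodic_def
    edge_pmf_const pmf_edge_pmf_alternating_even)

lemma mixture_two_periodic_odd:
  assumes "odd L"
  shows "(\<Sum>i\<in>UNIV. w i * pmf (edge_pmf L (two_periodic i)) (u, v)) =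
    (if u = v then w (u, False) + w (u, True) / real L
     else (w (False, True) + w (True, True)) * (real L - 1) / (2 * real L))"
  using assms odd_pos[OF assms] by (cases u; cases v) (simp_all add: sum_UNIV_bool_pair
    two_periodic_def edge_pmf_const pmf_edge_pmf_alternating_odd field_simps)

lemma has_extension_even:
  assumes "2 \<le> L" "even L" "LTI \<mu>"
  shows "has_extension L \<mu>"
proof (rule has_extension_finite_mixture[where X = two_periodic])
  let ?w = "\<lambda>(b, alt). if alt then pmf \<mu> (False, True) else pmf \<mu> (b, b)"
  show "0 \<le> ?w i" for i by (auto split: prod.split)
  show "(\<Sum>i\<in>UNIV. ?w i) = 1"
    using pmf_bool_pair_sum[of \<mu>] \<open>LTI \<mu>\<close> by (simp add: sum_UNIV_bool_pair LTI_def)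
  show "pmf \<mu> y = (\<Sum>i\<in>UNIV. ?w i * pmf (edge_pmf L (two_periodic i)) y)" for y
  proof (cases y)
    case (Pair u v)
    then show ?thesis
      using assms by (cases u; cases v) (simp_all add: mixture_two_periodic_even LTI_def)
  qed
qed (fact \<open>2 \<le> L\<close>)

lemma two_periodic_weights_odd:
  fixes c :: "bool \<Rightarrow> real" and p :: real
  assumes L: "1 < real L" and c_nonneg: "\<And>b. 0 \<le> c b" and "0 \<le> p"
    and total: "c False + c True + 2 * p = 1" and p_bound: "2 * p \<le> 1 - 1 / real L"
  obtains w :: "bool \<times> bool \<Rightarrow> real"
  where "\<And>i. 0 \<le> w i" "(\<Sum>i\<in>UNIV. w i) = 1"
    and "\<And>b. w (b, False) + w (b, True) / real L = c b"
    and "(w (False, True) + w (True, True)) * (real L - 1) / (2 * real L) = p"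
proof -
  define q where "q = c False + c True"
  define s where "s = 2 * p * real L / (real L - 1)"
  text \<open>s is the total weight of the alternating configurations; within each family the
    colour b gets the share c b / q.\<close>
  define w where "w = (\<lambda>(b, alt). (if alt then s else 1 - s) * c b / q)"
  have "0 < 1 / real L"
    using L by simp
  also have "\<dots> \<le> q"
    using p_bound total by (simp add: q_def)
  finally have q_pos: "0 < q" .
  have s_bounds: "0 \<le> s" "s \<le> 1"
    using L \<open>0 \<le> p\<close> p_bound by (simp_all add: s_def field_simps)
  show ?thesis
  proof (rule that[of w])
    show "0 \<le> w i" for i
      using s_bounds c_nonneg q_pos by (auto simp: w_def split: prod.split)
    have "(\<Sum>i\<in>UNIV. w i) = (c False + c True) / q"
      using q_pos by (simp add: sum_UNIV_bool_pair w_def field_simps)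
    then show "(\<Sum>i\<in>UNIV. w i) = 1"
      using q_pos by (simp add: q_def)
    show "w (b, False) + w (b, True) / real L = c b" for b
    proof -
      have "w (b, False) + w (b, True) / real L = c b * (1 - s * (real L - 1) / real L) / q"
        using L q_pos by (simp add: w_def field_simps)
      also have "1 - s * (real L - 1) / real L = q"
        using L total by (simp add: s_def q_def)
      finally show ?thesis
        using q_pos by simp
    qed
    have "w (False, True) + w (True, True) = s * q / q"
      by (simp add: w_def q_def add_divide_distrib ring_distribs)
    then show "(w (False, True) + w (True, True)) * (real L - 1) / (2 * real L) = p"
      using L q_pos by (simp add: s_def)
  qed
qed

lemma has_extension_odd:
  assumes "3 \<le> L" "odd L" "LTI \<mu>"
    and bound: "pmf \<mu> (False, True) + pmf \<mu> (True, False) \<le> 1 - 1 / real L"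
  shows "has_extension L \<mu>"
proof -
  have pmf_TF: "pmf \<mu> (True, False) = pmf \<mu> (False, True)"
    using \<open>LTI \<mu>\<close> by (simp add: LTI_def)
  have L: "1 < real L"
    using assms(1) by simp
  have p_bound: "2 * pmf \<mu> (False, True) \<le> 1 - 1 / real L"
    using bound pmf_TF by simp
  have total: "pmf \<mu> (False, False) + pmf \<mu> (True, True) + 2 * pmf \<mu> (False, True) = 1"
    using pmf_bool_pair_sum[of \<mu>] pmf_TF by simp
  obtain w where w_nonneg: "\<And>i. 0 \<le> w i" and w_sum: "(\<Sum>i\<in>UNIV. w i) = 1"
    and equal_edge: "\<And>b. w (b, False) + w (b, True) / real L = pmf \<mu> (b, b)"
    and unequal_edge: "(w (False, True) + w (True, True)) * (real L - 1) / (2 * real L) = pmf \<mu> (False, True)"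
    by (rule two_periodic_weights_odd[where c = "\<lambda>b. pmf \<mu> (b, b)", OF L _ _ total p_bound]) auto
  show ?thesis
  proof (rule has_extension_finite_mixture[where X = two_periodic, OF _ w_nonneg w_sum])
    show "pmf \<mu> y = (\<Sum>i\<in>UNIV. w i * pmf (edge_pmf L (two_periodic i)) y)" for y
      using equal_edge unequal_edge pmf_TF
      by (cases y; cases "fst y"; cases "snd y") (simp_all add: mixture_two_periodic_odd[OF \<open>odd L\<close>])
  qed (use assms(1) in simp)
qed

lemma funpow_rot_eq_shift: "x \<in> Y L \<Longrightarrow> (rot L ^^ i) x = shift L i x"
proof (induction i)
  case 0
  then show ?case by (intro ext) (auto simp: shift_def Y_def)
qed (simp add: rot_shift)

lemma map_pmf_funpow_fixed: "map_pmf f p = p \<Longrightarrow> map_pmf (f ^^ n) p = p"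
proof (induction n)
  case (Suc n)
  then show ?case by (simp add: pmf.map_comp[of f "f ^^ n", unfolded o_def, symmetric])
qed (simp add: pmf.map_id)

lemma edge_marginal_rot_invariant:
  assumes "2 \<le> L" "i < L" "set_pmf \<nu> \<subseteq> Y L" "map_pmf (rot L) \<nu> = \<nu>"
  shows "map_pmf (\<lambda>x. (x i, x (Suc i mod L))) \<nu> = map_pmf (\<lambda>x. (x 0, x 1)) \<nu>"
proof -
  have "map_pmf (\<lambda>x. (x i, x (Suc i mod L))) \<nu> = map_pmf (\<lambda>x. ((rot L ^^ i) x 0, (rot L ^^ i) x 1)) \<nu>"
  proof (rule map_pmf_cong[OF refl])
    fix x
    assume "x \<in> set_pmf \<nu>"
    with assms(3) have "x \<in> Y L" by blast
    then show "(x i, x (Suc i mod L)) = ((rot L ^^ i) x 0, (rot L ^^ i) x 1)"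
      by (simp only: funpow_rot_eq_shift shift_edge[OF assms(1,2)])
  qed
  also have "\<dots> = map_pmf (\<lambda>x. (x 0, x 1)) (map_pmf (rot L ^^ i) \<nu>)"
    by (simp add: pmf.map_comp o_def)
  also have "map_pmf (rot L ^^ i) \<nu> = \<nu>"
    using assms(4) by (rule map_pmf_funpow_fixed)
  finally show ?thesis .
qed

lemma odd_cycle_has_equal_edge:
  fixes x :: "nat \<Rightarrow> bool"
  assumes "odd L"
  shows "\<exists>i<L. x i = x (Suc i mod L)"
proof (rule ccontr)
  assume "\<not> ?thesis"
  then have flip: "x i \<noteq> x (Suc i mod L)" if "i < L" for i
    using that by blast
  have alternate: "x i = (x 0 \<noteq> odd i)" if "i < L" for i
    using that
  proof (induction i)
    case (Suc i)
    then show ?case using flip[of i] by simp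
  qed simp
  have "0 < L" using assms by (rule odd_pos)
  then have "x (L - 1) = x 0"
    using alternate[of "L - 1"] assms by simp
  moreover have "x (L - 1) \<noteq> x 0"
    using flip[of "L - 1"] \<open>0 < L\<close> by simp
  ultimately show False by simp
qed

lemma has_extension_odd_imp_bound:
  assumes "3 \<le> L" "odd L" "has_extension L \<mu>"
  shows "pmf \<mu> (False, True) + pmf \<mu> (True, False) \<le> 1 - 1 / real L"
proof -
  obtain \<nu> where Y: "set_pmf \<nu> \<subseteq> Y L" and inv: "map_pmf (rot L) \<nu> = \<nu>"
    and marg: "map_pmf (\<lambda>x. (x 0, x 1)) \<nu> = \<mu>"
    using assms(3) unfolding has_extension_def by blast
  define q where "q = pmf \<mu> (False, False) + pmf \<mu> (True, True)"
  let ?E = "\<lambda>i. {x :: nat \<Rightarrow> bool. x i = x (Suc i mod L)}"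
  have E: "measure \<nu> (?E i) = q" if "i < L" for i
  proof -
    have "?E i = (\<lambda>x. (x i, x (Suc i mod L))) -` {(False, False), (True, True)}"
      by auto
    then have "measure \<nu> (?E i) = measure (map_pmf (\<lambda>x. (x i, x (Suc i mod L))) \<nu>) {(False, False), (True, True)}"
      by (simp only: measure_map_pmf)
    also have "\<dots> = measure \<mu> {(False, False), (True, True)}"
      using edge_marginal_rot_invariant[OF _ that Y inv] assms(1) marg by simp
    also have "\<dots> = q"
      by (simp add: measure_measure_pmf_finite q_def)
    finally show ?thesis .
  qed
  have "(\<Union>i<L. ?E i) = UNIV"
    using odd_cycle_has_equal_edge[OF assms(2)] by blast
  then have "1 = measure \<nu> (\<Union>i<L. ?E i)"
    by simp
  also have "\<dots> \<le> (\<Sum>i<L. measure \<nu> (?E i))"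
    by (rule measure_pmf.finite_measure_subadditive_finite) auto
  also have "\<dots> = real L * q"
    using E by simp
  finally have "1 \<le> real L * q" .
  moreover have "q = 1 - (pmf \<mu> (False, True) + pmf \<mu> (True, False))"
    using pmf_bool_pair_sum[of \<mu>] by (simp add: q_def)
  ultimately show ?thesis
    using assms(1) by (simp add: field_simps)
qed

theorem mainTheorem5:
  fixes \<mu>1 :: "(bool \<times> bool) pmf" and L :: nat
  assumes "LTI \<mu>1"
  shows "(L \<ge> 2 \<and> even L \<longrightarrow> has_extension L \<mu>1) \<and>
         (L \<ge> 3 \<and> odd L \<longrightarrow>
            (has_extension L \<mu>1 \<longleftrightarrow>
               pmf \<mu>1 (False, True) + pmf \<mu>1 (True, False) \<le> 1 - 1 / real L))"
  using assms has_extension_even has_extension_odd has_extension_odd_imp_bound by blast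

end
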